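(* Let $F$ and $H$ be fixed graphs and let $r\ge |V(F)|$. Then $\widehat{\mathrm{ex}}_r(n,H,\text{Berge-}F)\le O(\mathrm{ex}(n,H,F))+O(n^{|V(H)|-1})$ as $n\to\infty$.
   Context: A hypergraph $\mathcal{H}$ is a Berge copy of a graph $G$ if $V(G)\subseteq V(\mathcal{H})$ and there is a bijection $f:E(G)\to E(\mathcal{H})$ with $e\subseteq f(e)$ for all $e\in E(G)$; $\mathcal{H}$ is Berge-$F$-free if it contains no Berge copy of $F$ as a subhypergraph. The shadow graph of a hypergraph $\mathcal{H}$ is the graph on $V(\mathcal{H})$ in which $uv$ is an edge iff some hyperedge contains both $u$ and $v$. $\widehat{\mathrm{ex}}_r(n,H,\text{Berge-}F)$ is the maximum number of copies of $H$ in the shadow graph of an $r$-uniform Berge-$F$-free $n$-vertex hypergraph. $\mathrm{ex}(n,H,F)$ is the maximum number of copies of $H$ in an $F$-free $n$-vertex graph. *)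

theory Defs
  imports Complex_Main
begin

definition is_graph :: "'a set \<Rightarrow> 'a set set \<Rightarrow> bool" where
  "is_graph V E \<longleftrightarrow> finite V \<and> (\<forall>e\<in>E. e \<subseteq> V \<and> card e = 2)"

definition graph_iso :: "'a set \<Rightarrow> 'a set set \<Rightarrow> 'b set \<Rightarrow> 'b set set \<Rightarrow> bool" where
  "graph_iso V1 E1 V2 E2 \<longleftrightarrow>
     (\<exists>\<phi>. bij_betw \<phi> V1 V2 \<and> (\<forall>x\<in>V1. \<forall>y\<in>V1. ({x, y} \<in> E1 \<longleftrightarrow> {\<phi> x, \<phi> y} \<in> E2)))"

definition num_copies :: "'b set \<Rightarrow> 'b set set \<Rightarrow> 'a set \<Rightarrow> 'a set set \<Rightarrow> nat" where
  "num_copies VH EH V E =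
     card {(V', E'). V' \<subseteq> V \<and> E' \<subseteq> E \<and> (\<forall>e\<in>E'. e \<subseteq> V') \<and> graph_iso V' E' VH EH}"

definition contains_subgraph :: "'b set \<Rightarrow> 'b set set \<Rightarrow> 'a set \<Rightarrow> 'a set set \<Rightarrow> bool" where
  "contains_subgraph VF EF V E \<longleftrightarrow>
     (\<exists>\<phi>. inj_on \<phi> VF \<and> \<phi> ` VF \<subseteq> V \<and> (\<forall>x\<in>VF. \<forall>y\<in>VF. {x, y} \<in> EF \<longrightarrow> {\<phi> x, \<phi> y} \<in> E))"

definition contains_Berge :: "'b set \<Rightarrow> 'b set set \<Rightarrow> 'a set \<Rightarrow> 'a set set \<Rightarrow> bool" where
  "contains_Berge VF EF V HH \<longleftrightarrow>
     (\<exists>\<phi> f. inj_on \<phi> VF \<and> \<phi> ` VF \<subseteq> V \<and> inj_on f EF \<and> f ` EF \<subseteq> HH \<and>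
        (\<forall>e\<in>EF. \<phi> ` e \<subseteq> f e))"

definition shadow :: "'a set set \<Rightarrow> 'a set set" where
  "shadow HH = {{u, v} | u v. u \<noteq> v \<and> (\<exists>h\<in>HH. u \<in> h \<and> v \<in> h)}"

definition uniform_hypergraphs :: "nat \<Rightarrow> nat \<Rightarrow> nat set set set" where
  "uniform_hypergraphs r n = {HH. \<forall>h\<in>HH. h \<subseteq> {0..<n} \<and> card h = r}"

definition ex_gen :: "nat \<Rightarrow> 'b set \<Rightarrow> 'b set set \<Rightarrow> 'c set \<Rightarrow> 'c set set \<Rightarrow> nat" where
  "ex_gen n VH EH VF EF =
     Sup {num_copies VH EH {0..<n} E | E.
            is_graph {0..<n} E \<and> \<not> contains_subgraph VF EF {0..<n} E}"

definition ex_hat :: "nat \<Rightarrow> nat \<Rightarrow> 'b set \<Rightarrow> 'b set set \<Rightarrow> 'c set \<Rightarrow> 'c set set \<Rightarrow> nat" where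
  "ex_hat r n VH EH VF EF =
     Sup {num_copies VH EH {0..<n} (shadow HH) | HH.
            HH \<in> uniform_hypergraphs r n \<and> \<not> contains_Berge VF EF {0..<n} HH}"

end

theory Submission
  imports Defs "HOL-Library.FuncSet"
begin

text \<open>
  A Berge-F-free r-uniform hypergraph with r \<ge> |V(F)| has O(n^2) hyperedges: F embeds into
  every hyperedge h, and if each edge of such an embedding lay in at least |E(F)| hyperedges,
  distinct ones could be chosen greedily, giving a Berge-F; so h contains a pair lying in fewer
  than |E(F)| hyperedges.

  Copies of H in the shadow are of two kinds. If some hyperedge contains two edges of the copy,
  its vertex set contains three vertices of that hyperedge, leaving O(n^2 * n^(|V(H)|-3))
  possibilities. Otherwise the edges of the copy lie in distinct hyperedges. Selecting one pair
  from every hyperedge yields an F-free graph, and a uniformly random selection contains such a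
  copy with probability at least (r choose 2)^(-2^|V(H)|); hence there are at most
  (r choose 2)^(2^|V(H)|) ex(n, H, F) of them.
\<close>

definition copies :: "'b set \<Rightarrow> 'b set set \<Rightarrow> 'a set \<Rightarrow> 'a set set \<Rightarrow> ('a set \<times> 'a set set) set" where
  "copies VH EH V E = {(V', E'). V' \<subseteq> V \<and> E' \<subseteq> E \<and> (\<forall>e\<in>E'. e \<subseteq> V') \<and> graph_iso V' E' VH EH}"

lemma num_copies_eq_card_copies: "num_copies VH EH V E = card (copies VH EH V E)"
  unfolding num_copies_def copies_def ..

lemma finite_copies: "finite V \<Longrightarrow> finite (copies VH EH V E)"
  by (rule finite_subset[of _ "Pow V \<times> Pow (Pow V)"]) (auto simp: copies_def)

lemma copies_mono_edges:
  "(V', E') \<in> copies VH EH V E \<Longrightarrow> E' \<subseteq> E2 \<Longrightarrow> (V', E') \<in> copies VH EH V E2"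
  unfolding copies_def by auto

lemma card_copy_vertices: "(V', E') \<in> copies VH EH V E \<Longrightarrow> card V' = card VH"
  unfolding copies_def graph_iso_def by (auto intro: bij_betw_same_card)

lemma card_copy_edges_le:
  assumes "finite V" "(V', E') \<in> copies VH EH V E"
  shows "card E' \<le> 2 ^ card VH"
proof -
  have "finite V'" "E' \<subseteq> Pow V'"
    using assms finite_subset unfolding copies_def by auto
  then have "card E' \<le> card (Pow V')" by (intro card_mono) auto
  then show ?thesis using card_copy_vertices[OF assms(2)] \<open>finite V'\<close> by (simp add: card_Pow)
qed

lemma num_copies_le_ex_gen:
  assumes "is_graph {0..<n} E" "\<not> contains_subgraph VF EF {0..<n} E"
  shows "num_copies VH EH {0..<n} E \<le> ex_gen n VH EH VF EF"
proof -
  let ?S = "{num_copies VH EH {0..<n} E | E. is_graph {0..<n} E \<and> \<not> contains_subgraph VF EF {0..<n} E}"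
  have "?S \<subseteq> (\<lambda>E. num_copies VH EH {0..<n} E) ` Pow (Pow {0..<n})"
    unfolding is_graph_def by auto
  then have "finite ?S" by (rule finite_subset) simp
  moreover have "num_copies VH EH {0..<n} E \<in> ?S" using assms by auto
  ultimately show ?thesis unfolding ex_gen_def by (simp add: cSup_upper)
qed

lemma ex_hat_le:
  assumes "\<And>HH. HH \<in> uniform_hypergraphs r n \<Longrightarrow> \<not> contains_Berge VF EF {0..<n} HH \<Longrightarrow>
             num_copies VH EH {0..<n} (shadow HH) \<le> b"
  shows "ex_hat r n VH EH VF EF \<le> b"
proof -
  let ?S = "{num_copies VH EH {0..<n} (shadow HH) | HH.
              HH \<in> uniform_hypergraphs r n \<and> \<not> contains_Berge VF EF {0..<n} HH}"
  have "?S \<subseteq> (\<lambda>HH. num_copies VH EH {0..<n} (shadow HH)) ` Pow (Pow {0..<n})"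
    unfolding uniform_hypergraphs_def by auto
  then have "finite ?S" by (rule finite_subset) simp
  then show ?thesis
    unfolding ex_hat_def Sup_nat_def using assms by (auto intro: Max.boundedI)
qed

lemma finite_uniform_hypergraph: "HH \<in> uniform_hypergraphs r n \<Longrightarrow> finite HH"
  by (rule finite_subset[of _ "Pow {0..<n}"]) (auto simp: uniform_hypergraphs_def)

lemma uniform_hypergraphsD:
  assumes "HH \<in> uniform_hypergraphs r n" "h \<in> HH"
  shows "h \<subseteq> {0..<n}" "finite h" "card h = r"
  using assms finite_subset[of h "{0..<n}"] unfolding uniform_hypergraphs_def by auto

lemma shadow_edgeD:
  assumes "e \<in> shadow HH"
  shows "card e = 2" "\<exists>h\<in>HH. e \<subseteq> h"
  using assms unfolding shadow_def by auto

lemma choose_le_pow: "(n::nat) choose k \<le> n ^ k"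
  by (cases "k \<le> n") (auto simp: binomial_le_pow binomial_eq_0)

lemma inj_selection_exists:
  assumes "finite A" "\<And>x. x \<in> A \<Longrightarrow> finite (S x) \<and> card A \<le> card (S x)"
  shows "\<exists>f. inj_on f A \<and> (\<forall>x\<in>A. f x \<in> S x)"
  using assms
proof (induction A rule: finite_induct)
  case empty
  then show ?case by auto
next
  case (insert a A)
  then obtain f where f: "inj_on f A" "\<forall>x\<in>A. f x \<in> S x" by force
  have "card (f ` A) < card (S a)"
    using insert.hyps insert.prems[of a] card_image_le[of A f] by simp
  then have "\<not> S a \<subseteq> f ` A"
    using card_mono[of "f ` A" "S a"] insert.hyps(1) by auto
  then obtain b where b: "b \<in> S a" "b \<notin> f ` A" by blast
  have "inj_on (f(a := b)) (insert a A)" "\<forall>x\<in>insert a A. (f(a := b)) x \<in> S x"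
    using f b insert.hyps(2) by (auto simp: inj_on_def image_iff)
  then show ?case by blast
qed

lemma is_graph_finite_edges: "is_graph V E \<Longrightarrow> finite E"
  unfolding is_graph_def by (meson Pow_iff finite_Pow_iff rev_finite_subset subsetI)

lemma is_graph_edgeE:
  assumes "is_graph V E" "e \<in> E"
  obtains x y where "x \<in> V" "y \<in> V" "x \<noteq> y" "e = {x, y}"
  using assms unfolding is_graph_def by (metis card_2_iff insert_subset)

lemma contains_Berge_if_edges_heavy:
  assumes "is_graph VF EF" "inj_on \<phi> VF" "\<phi> ` VF \<subseteq> V" "finite HH"
    and heavy: "\<And>e. e \<in> EF \<Longrightarrow> card EF \<le> card {h\<in>HH. \<phi> ` e \<subseteq> h}"
  shows "contains_Berge VF EF V HH"
proof -
  obtain f where "inj_on f EF" "\<forall>e\<in>EF. f e \<in> {h\<in>HH. \<phi> ` e \<subseteq> h}"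
    using inj_selection_exists[of EF "\<lambda>e. {h\<in>HH. \<phi> ` e \<subseteq> h}"]
      is_graph_finite_edges[OF assms(1)] assms(4) heavy by auto
  then show ?thesis unfolding contains_Berge_def using assms(2,3) by blast
qed

lemma two_le_card_if_Berge_free:
  assumes "is_graph VF EF" "card VF \<le> n" "\<not> contains_Berge VF EF {0..<n} HH"
  shows "2 \<le> card VF"
proof -
  have "finite VF" using assms(1) unfolding is_graph_def by simp
  then obtain \<phi> where "inj_on \<phi> VF" "\<phi> ` VF \<subseteq> {0..<n}"
    using card_le_inj[of VF "{0..<n}"] assms(2) by auto
  have "EF \<noteq> {}"
  proof
    assume "EF = {}"
    then have "contains_Berge VF EF {0..<n} HH"
      using \<open>inj_on \<phi> VF\<close> \<open>\<phi> ` VF \<subseteq> {0..<n}\<close> unfolding contains_Berge_def by auto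
    with assms(3) show False ..
  qed
  then obtain e where "e \<in> EF" by blast
  then obtain x y where "x \<in> VF" "y \<in> VF" "x \<noteq> y"
    using is_graph_edgeE[OF assms(1)] by metis
  then show ?thesis using card_mono[OF \<open>finite VF\<close>, of "{x, y}"] by simp
qed

lemma light_pair_in_hyperedge:
  assumes "is_graph VF EF" "finite HH" "h \<in> HH" "h \<subseteq> V" "finite h" "card VF \<le> card h"
    and "\<not> contains_Berge VF EF V HH"
  shows "\<exists>p. p \<subseteq> h \<and> card p = 2 \<and> card {h'\<in>HH. p \<subseteq> h'} < card EF"
proof -
  have "finite VF" using assms(1) unfolding is_graph_def by simp
  then obtain \<phi> where \<phi>: "inj_on \<phi> VF" "\<phi> ` VF \<subseteq> h"
    using card_le_inj[of VF h] assms(5,6) by auto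
  then obtain e where e: "e \<in> EF" "card {h'\<in>HH. \<phi> ` e \<subseteq> h'} < card EF"
    using contains_Berge_if_edges_heavy[of VF EF \<phi> V HH] assms by force
  obtain x y where "x \<in> VF" "y \<in> VF" "x \<noteq> y" "e = {x, y}"
    using is_graph_edgeE[OF assms(1) e(1)] .
  moreover have "\<phi> x \<noteq> \<phi> y" using \<phi>(1) \<open>x \<in> VF\<close> \<open>y \<in> VF\<close> \<open>x \<noteq> y\<close> by (meson inj_onD)
  ultimately have "\<phi> ` e \<subseteq> h" "card (\<phi> ` e) = 2" using \<phi>(2) by auto
  with e show ?thesis by blast
qed

lemma card_Berge_free_le:
  assumes "is_graph VF EF" "HH \<in> uniform_hypergraphs r n" "card VF \<le> r"
    and "\<not> contains_Berge VF EF {0..<n} HH"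
  shows "card HH \<le> card EF * n^2"
proof -
  let ?L = "{p. p \<subseteq> {0..<n} \<and> card p = 2 \<and> card {h\<in>HH. p \<subseteq> h} < card EF}"
  have "finite ?L" by (rule finite_subset[of _ "Pow {0..<n}"]) auto
  have "HH \<subseteq> (\<Union>p\<in>?L. {h\<in>HH. p \<subseteq> h})"
  proof
    fix h assume "h \<in> HH"
    with assms obtain p where "p \<subseteq> h" "card p = 2" "card {h'\<in>HH. p \<subseteq> h'} < card EF"
      using light_pair_in_hyperedge[of VF EF HH h "{0..<n}"]
        finite_uniform_hypergraph uniform_hypergraphsD by metis
    with \<open>h \<in> HH\<close> show "h \<in> (\<Union>p\<in>?L. {h\<in>HH. p \<subseteq> h})"
      using uniform_hypergraphsD(1)[OF assms(2)] by blast
  qed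
  then have "card HH \<le> card (\<Union>p\<in>?L. {h\<in>HH. p \<subseteq> h})"
    using finite_uniform_hypergraph[OF assms(2)] by (intro card_mono) auto
  also have "\<dots> \<le> (\<Sum>p\<in>?L. card {h\<in>HH. p \<subseteq> h})"
    by (rule card_UN_le[OF \<open>finite ?L\<close>])
  also have "\<dots> \<le> (\<Sum>p\<in>?L. card EF)"
    by (intro sum_mono) auto
  also have "\<dots> = card ?L * card EF" by simp
  also have "card ?L \<le> card {p. p \<subseteq> {0..<n} \<and> card p = 2}"
    by (rule card_mono) (auto intro: finite_subset[of _ "Pow {0..<n}"])
  also have "\<dots> = n choose 2" using n_subsets[of "{0..<n}" 2] by simp
  also have "\<dots> \<le> n^2" by (rule choose_le_pow)
  finally show ?thesis by (simp add: mult.commute)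
qed

definition one_edge_per_hyperedge :: "'a set set \<Rightarrow> 'a set set \<Rightarrow> bool" where
  "one_edge_per_hyperedge HH E \<longleftrightarrow> (\<forall>h\<in>HH. \<forall>e1\<in>E. \<forall>e2\<in>E. e1 \<subseteq> h \<longrightarrow> e2 \<subseteq> h \<longrightarrow> e1 = e2)"

lemma three_le_card_Un_pairs:
  assumes "card e1 = 2" "card e2 = 2" "e1 \<noteq> e2"
  shows "3 \<le> card (e1 \<union> e2)"
proof -
  have "finite e1" "finite e2" using assms(1,2) card.infinite by fastforce+
  have "\<not> e2 \<subseteq> e1"
  proof
    assume "e2 \<subseteq> e1"
    then have "e2 = e1" using card_subset_eq[OF \<open>finite e1\<close>] assms(1,2) by simp
    with assms(3) show False by simp
  qed
  then have "card e1 < card (e1 \<union> e2)"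
    using \<open>finite e1\<close> \<open>finite e2\<close> by (intro psubset_card_mono) auto
  with assms(1) show ?thesis by simp
qed

lemma hyperedge_triple_in_copy:
  assumes "(V', E') \<in> copies VH EH V G" "\<forall>e\<in>G. card e = 2" "\<not> one_edge_per_hyperedge HH E'"
  obtains h T where "h \<in> HH" "T \<subseteq> h" "T \<subseteq> V'" "card T = 3"
proof -
  obtain h e1 e2 where h: "h \<in> HH" "e1 \<in> E'" "e2 \<in> E'" "e1 \<subseteq> h" "e2 \<subseteq> h" "e1 \<noteq> e2"
    using assms(3) unfolding one_edge_per_hyperedge_def by blast
  have "e1 \<subseteq> V'" "e2 \<subseteq> V'" "card e1 = 2" "card e2 = 2"
    using assms(1,2) h(2,3) unfolding copies_def by auto
  then have "3 \<le> card (e1 \<union> e2)" using three_le_card_Un_pairs h(6) by blast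
  then obtain T where "T \<subseteq> e1 \<union> e2" "card T = 3" by (meson obtain_subset_with_card_n)
  show thesis
  proof (rule that)
    show "h \<in> HH" "card T = 3" by fact+
    show "T \<subseteq> h" "T \<subseteq> V'"
      using \<open>T \<subseteq> e1 \<union> e2\<close> h(4,5) \<open>e1 \<subseteq> V'\<close> \<open>e2 \<subseteq> V'\<close> by auto
  qed
qed

lemma three_le_card_if_not_one_edge_per_hyperedge:
  assumes "finite V" "(V', E') \<in> copies VH EH V G" "\<forall>e\<in>G. card e = 2"
    "\<not> one_edge_per_hyperedge HH E'"
  shows "3 \<le> card VH"
proof -
  obtain h T where "T \<subseteq> V'" "card T = 3"
    using hyperedge_triple_in_copy[OF assms(2-4)] .
  moreover have "finite V'" using assms(1,2) finite_subset unfolding copies_def by auto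
  ultimately have "3 \<le> card V'" using card_mono by metis
  then show ?thesis using card_copy_vertices[OF assms(2)] by simp
qed

text \<open>A k-set containing a fixed triple T is determined by the remaining (k-3)-set.\<close>
lemma card_sets_containing_hyperedge_triple_le:
  assumes "finite HH" "\<And>h. h \<in> HH \<Longrightarrow> finite h \<and> card h = r"
  shows "card {V'. V' \<subseteq> {0..<n} \<and> card V' = k \<and> (\<exists>h\<in>HH. \<exists>T. T \<subseteq> h \<and> T \<subseteq> V' \<and> card T = 3)}
           \<le> card HH * r^3 * n^(k - 3)"
proof -
  define triples where "triples h = {T. T \<subseteq> h \<and> card T = 3}" for h :: "nat set"
  define rest where "rest = {U. U \<subseteq> {0..<n} \<and> card U = k - 3}"
  have "finite rest" unfolding rest_def by (rule finite_subset[of _ "Pow {0..<n}"]) auto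
  have finite_triples: "finite (triples h)" if "h \<in> HH" for h
    using assms(2)[OF that] unfolding triples_def by simp
  have card_triples: "card (triples h) = r choose 3" if "h \<in> HH" for h
    using assms(2)[OF that] n_subsets[of h 3] unfolding triples_def by simp
  have "{V'. V' \<subseteq> {0..<n} \<and> card V' = k \<and> (\<exists>h\<in>HH. \<exists>T. T \<subseteq> h \<and> T \<subseteq> V' \<and> card T = 3)}
          \<subseteq> (\<Union>h\<in>HH. \<Union>T\<in>triples h. (\<union>) T ` rest)"
  proof safe
    fix V' h T assume V': "V' \<subseteq> {0..<n}" "k = card V'" "h \<in> HH" "T \<subseteq> h" "T \<subseteq> V'" "card T = 3"
    have "finite T" using \<open>card T = 3\<close> card.infinite by fastforce
    then have "card (V' - T) = k - 3" using V'(2,5,6) by (simp add: card_Diff_subset)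
    then have "V' - T \<in> rest" unfolding rest_def using V'(1) by blast
    have "T \<in> triples h" unfolding triples_def using V'(4,6) by blast
    have "V' \<in> (\<union>) T ` rest"
      using \<open>V' - T \<in> rest\<close> by (rule rev_image_eqI) (use V'(5) in blast)
    with V'(3) \<open>T \<in> triples h\<close> show "V' \<in> (\<Union>h\<in>HH. \<Union>T\<in>triples h. (\<union>) T ` rest)"
      by blast
  qed
  then have "card {V'. V' \<subseteq> {0..<n} \<and> card V' = k \<and> (\<exists>h\<in>HH. \<exists>T. T \<subseteq> h \<and> T \<subseteq> V' \<and> card T = 3)}
      \<le> card (\<Union>h\<in>HH. \<Union>T\<in>triples h. (\<union>) T ` rest)"
    using assms(1) \<open>finite rest\<close> finite_triples by (intro card_mono) auto
  also have "\<dots> \<le> (\<Sum>h\<in>HH. card (\<Union>T\<in>triples h. (\<union>) T ` rest))"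
    by (rule card_UN_le[OF assms(1)])
  also have "\<dots> \<le> (\<Sum>h\<in>HH. (r choose 3) * (n choose (k - 3)))"
  proof (rule sum_mono)
    fix h assume "h \<in> HH"
    have "card (\<Union>T\<in>triples h. (\<union>) T ` rest) \<le> (\<Sum>T\<in>triples h. card ((\<union>) T ` rest))"
      by (rule card_UN_le[OF finite_triples[OF \<open>h \<in> HH\<close>]])
    also have "\<dots> \<le> (\<Sum>T\<in>triples h. n choose (k - 3))"
      using card_image_le[OF \<open>finite rest\<close>] n_subsets[of "{0..<n}" "k - 3"]
      by (intro sum_mono) (simp add: rest_def)
    finally show "card (\<Union>T\<in>triples h. (\<union>) T ` rest) \<le> (r choose 3) * (n choose (k - 3))"
      using card_triples[OF \<open>h \<in> HH\<close>] by simp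
  qed
  also have "\<dots> \<le> card HH * (r^3 * n^(k - 3))"
    by (simp add: choose_le_pow mult_le_mono)
  finally show ?thesis by (simp add: mult.assoc)
qed

lemma card_copies_not_one_edge_per_hyperedge_le:
  assumes "HH \<in> uniform_hypergraphs r n" "\<forall>e\<in>G. card e = 2"
  shows "card {c \<in> copies VH EH {0..<n} G. \<not> one_edge_per_hyperedge HH (snd c)}
           \<le> 2^(2^card VH) * card HH * r^3 * n^(card VH - 3)"
proof -
  define W where "W = {V'. V' \<subseteq> {0..<n} \<and> card V' = card VH \<and>
                             (\<exists>h\<in>HH. \<exists>T. T \<subseteq> h \<and> T \<subseteq> V' \<and> card T = 3)}"
  have finite_W: "finite W" unfolding W_def by (rule finite_subset[of _ "Pow {0..<n}"]) auto
  have W_fin: "finite V'" "card V' = card VH" if "V' \<in> W" for V'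
    using that finite_subset[of V' "{0..<n}"] unfolding W_def by auto
  have "{c \<in> copies VH EH {0..<n} G. \<not> one_edge_per_hyperedge HH (snd c)} \<subseteq> Sigma W (\<lambda>V'. Pow (Pow V'))"
  proof
    fix c assume "c \<in> {c \<in> copies VH EH {0..<n} G. \<not> one_edge_per_hyperedge HH (snd c)}"
    moreover obtain V' E' where V'E': "c = (V', E')" by (cases c)
    ultimately have c: "(V', E') \<in> copies VH EH {0..<n} G" "\<not> one_edge_per_hyperedge HH E'" by auto
    obtain h T where "h \<in> HH" "T \<subseteq> h" "T \<subseteq> V'" "card T = 3"
      using hyperedge_triple_in_copy[OF c(1) assms(2) c(2)] by blast
    with c(1) show "c \<in> Sigma W (\<lambda>V'. Pow (Pow V'))"
      unfolding W_def V'E' using card_copy_vertices[OF c(1)] by (auto simp: copies_def)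
  qed
  then have "card {c \<in> copies VH EH {0..<n} G. \<not> one_edge_per_hyperedge HH (snd c)}
      \<le> card (Sigma W (\<lambda>V'. Pow (Pow V')))"
    using finite_W W_fin by (intro card_mono) auto
  also have "\<dots> = card W * 2^(2^card VH)"
    using finite_W W_fin by (simp add: card_Pow)
  also have "\<dots> \<le> (card HH * r^3 * n^(card VH - 3)) * 2^(2^card VH)"
    unfolding W_def using finite_uniform_hypergraph[OF assms(1)] uniform_hypergraphsD[OF assms(1)]
    by (intro mult_le_mono1 card_sets_containing_hyperedge_triple_le) auto
  finally show ?thesis by (simp only: ac_simps)
qed

lemma double_counting_le:
  assumes "finite A" "finite B"
    and "\<And>a. a \<in> A \<Longrightarrow> d \<le> card {b\<in>B. R a b}"
    and "\<And>b. b \<in> B \<Longrightarrow> card {a\<in>A. R a b} \<le> D"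
  shows "card A * d \<le> card B * D"
proof -
  have "card A * d \<le> (\<Sum>a\<in>A. card {b\<in>B. R a b})"
    using sum_bounded_below[of A d] assms(3) by simp
  also have "\<dots> = (\<Sum>b\<in>B. card {a\<in>A. R a b})"
    using sum.swap_restrict[OF assms(1,2), of "\<lambda>_ _. 1::nat" R] by simp
  also have "\<dots> \<le> card B * D"
    using sum_bounded_above[of B _ D] assms(4) by simp
  finally show ?thesis .
qed

definition pair_selections :: "'a set set \<Rightarrow> ('a set \<Rightarrow> 'a set) set" where
  "pair_selections HH = (\<Pi>\<^sub>E h\<in>HH. {e. e \<subseteq> h \<and> card e = 2})"

lemma finite_pair_selections:
  "finite HH \<Longrightarrow> (\<And>h. h \<in> HH \<Longrightarrow> finite h) \<Longrightarrow> finite (pair_selections HH)"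
  unfolding pair_selections_def by (intro finite_PiE) auto

lemma card_pair_selections:
  assumes "finite HH" "\<And>h. h \<in> HH \<Longrightarrow> finite h \<and> card h = r"
  shows "card (pair_selections HH) = (r choose 2) ^ card HH"
  unfolding pair_selections_def using assms by (simp add: card_PiE n_subsets)

lemma pair_selectionsD:
  "p \<in> pair_selections HH \<Longrightarrow> h \<in> HH \<Longrightarrow> p h \<subseteq> h \<and> card (p h) = 2"
  unfolding pair_selections_def by auto

text \<open>Pulling back a copy of F in the selected graph along the selection gives a Berge copy of F.\<close>
lemma selected_graph_not_contains_subgraph:
  assumes "is_graph VF EF" "p \<in> pair_selections HH" "\<not> contains_Berge VF EF V HH"
  shows "\<not> contains_subgraph VF EF V (p ` HH)"
proof
  assume "contains_subgraph VF EF V (p ` HH)"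
  then obtain \<phi> where \<phi>: "inj_on \<phi> VF" "\<phi> ` VF \<subseteq> V"
    and edges: "\<forall>x\<in>VF. \<forall>y\<in>VF. {x, y} \<in> EF \<longrightarrow> {\<phi> x, \<phi> y} \<in> p ` HH"
    unfolding contains_subgraph_def by blast
  have "\<exists>h. h \<in> HH \<and> p h = \<phi> ` e" if e: "e \<in> EF" for e
  proof -
    obtain x y where "x \<in> VF" "y \<in> VF" "x \<noteq> y" "e = {x, y}"
      using is_graph_edgeE[OF assms(1) e] .
    then have "\<phi> ` e \<in> p ` HH" using edges e by auto
    then show ?thesis by (metis imageE)
  qed
  then have "\<exists>f. \<forall>e\<in>EF. f e \<in> HH \<and> p (f e) = \<phi> ` e"
    by (intro bchoice[of EF "\<lambda>e h. h \<in> HH \<and> p h = \<phi> ` e"]) simp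
  then obtain f where f: "\<And>e. e \<in> EF \<Longrightarrow> f e \<in> HH \<and> p (f e) = \<phi> ` e" by blast
  have "inj_on f EF"
  proof (rule inj_onI)
    fix e1 e2 assume "e1 \<in> EF" "e2 \<in> EF" "f e1 = f e2"
    then have "\<phi> ` e1 = \<phi> ` e2" using f by metis
    moreover have "e1 \<subseteq> VF" "e2 \<subseteq> VF"
      using \<open>e1 \<in> EF\<close> \<open>e2 \<in> EF\<close> assms(1) unfolding is_graph_def by auto
    ultimately show "e1 = e2" using \<phi>(1) by (simp add: inj_on_image_eq_iff)
  qed
  moreover have "\<phi> ` e \<subseteq> f e" if "e \<in> EF" for e
    using f[OF that] pair_selectionsD[OF assms(2)] by metis
  moreover have "f ` EF \<subseteq> HH" using f by blast
  ultimately have "contains_Berge VF EF V HH"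
    unfolding contains_Berge_def using \<phi> by blast
  with assms(3) show False ..
qed

lemma hosts_of_one_edge_per_hyperedge:
  assumes "E' \<subseteq> shadow HH" "one_edge_per_hyperedge HH E'"
  obtains g where "inj_on g E'" "\<And>e. e \<in> E' \<Longrightarrow> g e \<in> HH \<and> e \<subseteq> g e"
proof -
  have "\<forall>e\<in>E'. \<exists>h. h \<in> HH \<and> e \<subseteq> h" using shadow_edgeD(2) assms(1) by blast
  then have "\<exists>g. \<forall>e\<in>E'. g e \<in> HH \<and> e \<subseteq> g e"
    by (intro bchoice[of E' "\<lambda>e h. h \<in> HH \<and> e \<subseteq> h"])
  then obtain g where g: "\<And>e. e \<in> E' \<Longrightarrow> g e \<in> HH \<and> e \<subseteq> g e" by blast
  moreover have "inj_on g E'"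
    using g assms(2) unfolding one_edge_per_hyperedge_def by (intro inj_onI) metis
  ultimately show ?thesis using that by blast
qed

text \<open>The edges of E' sit in distinct hyperedges, so fixing the selection there
  leaves the other hyperedges free.\<close>
lemma card_selections_covering_ge:
  assumes "finite HH" "\<And>h. h \<in> HH \<Longrightarrow> finite h \<and> card h = r"
    and "finite E'" "E' \<subseteq> shadow HH" "one_edge_per_hyperedge HH E'"
  shows "(r choose 2) ^ (card HH - card E') \<le> card {p \<in> pair_selections HH. E' \<subseteq> p ` HH}"
proof -
  obtain g where g_inj: "inj_on g E'" and g: "\<And>e. e \<in> E' \<Longrightarrow> g e \<in> HH \<and> e \<subseteq> g e"
    using hosts_of_one_edge_per_hyperedge[OF assms(4,5)] by blast
  have gE: "g ` E' \<subseteq> HH" using g by auto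
  define Q where "Q h = (if h \<in> g ` E' then {inv_into E' g h} else {e. e \<subseteq> h \<and> card e = 2})" for h
  have "Q h \<subseteq> {e. e \<subseteq> h \<and> card e = 2}" if "h \<in> HH" for h
    using g g_inj assms(4) shadow_edgeD(1) by (auto simp: Q_def) blast+
  then have "Pi\<^sub>E HH Q \<subseteq> pair_selections HH"
    unfolding pair_selections_def by (rule PiE_mono)
  moreover have "E' \<subseteq> p ` HH" if "p \<in> Pi\<^sub>E HH Q" for p
  proof
    fix e assume "e \<in> E'"
    then have "p (g e) \<in> Q (g e)" using that g by (simp add: PiE_mem)
    then have "p (g e) = e" using \<open>e \<in> E'\<close> g_inj by (simp add: Q_def)
    then show "e \<in> p ` HH" using g[OF \<open>e \<in> E'\<close>] by force
  qed
  ultimately have "Pi\<^sub>E HH Q \<subseteq> {p \<in> pair_selections HH. E' \<subseteq> p ` HH}" by blast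
  then have "card (Pi\<^sub>E HH Q) \<le> card {p \<in> pair_selections HH. E' \<subseteq> p ` HH}"
    using finite_pair_selections[of HH] assms(1,2) by (intro card_mono) auto
  moreover have "card (Pi\<^sub>E HH Q) = (r choose 2) ^ (card HH - card E')"
  proof -
    have "card (Pi\<^sub>E HH Q) = (\<Prod>h\<in>HH. card (Q h))" by (rule card_PiE[OF assms(1)])
    also have "\<dots> = (\<Prod>h\<in>HH - g ` E'. card (Q h)) * (\<Prod>h\<in>g ` E'. card (Q h))"
      by (rule prod.subset_diff[OF gE assms(1)])
    also have "\<dots> = (r choose 2) ^ card (HH - g ` E')"
      using assms(2) by (simp add: Q_def n_subsets)
    also have "card (HH - g ` E') = card HH - card E'"
      using card_Diff_subset[OF finite_imageI[OF assms(3)] gE] card_image[OF g_inj] by simp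
    finally show ?thesis .
  qed
  ultimately show ?thesis by simp
qed

lemma card_copies_one_edge_per_hyperedge_le:
  assumes "is_graph VF EF" "HH \<in> uniform_hypergraphs r n" "2 \<le> r" "finite VH"
    and "\<not> contains_Berge VF EF {0..<n} HH"
  shows "card {c \<in> copies VH EH {0..<n} (shadow HH). one_edge_per_hyperedge HH (snd c)}
           \<le> (r choose 2)^(2^card VH) * ex_gen n VH EH VF EF"
proof -
  let ?B = "{c \<in> copies VH EH {0..<n} (shadow HH). one_edge_per_hyperedge HH (snd c)}"
  let ?C = "r choose 2" and ?K = "2^card VH" and ?m = "card HH"
  let ?ex = "ex_gen n VH EH VF EF"
  have HH: "finite HH" "\<And>h. h \<in> HH \<Longrightarrow> finite h \<and> card h = r"
    using finite_uniform_hypergraph[OF assms(2)] uniform_hypergraphsD[OF assms(2)] by auto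
  have "?C \<ge> 1" using assms(3) by (simp add: Suc_le_eq)
  have "card ?B * ?C^(?m - ?K) \<le> card (pair_selections HH) * ?ex"
  proof (rule double_counting_le[where R = "\<lambda>c p. snd c \<subseteq> p ` HH"])
    show "finite ?B" using finite_copies[of "{0..<n}" VH EH "shadow HH"] by simp
    show "finite (pair_selections HH)" using HH by (intro finite_pair_selections) auto
  next
    fix c assume "c \<in> ?B"
    then obtain V' E' where c: "c = (V', E')" "(V', E') \<in> copies VH EH {0..<n} (shadow HH)"
      "one_edge_per_hyperedge HH E'" by (cases c) auto
    have "E' \<subseteq> Pow {0..<n}" "E' \<subseteq> shadow HH" using c(2) by (auto simp: copies_def)
    then have "finite E'" by (simp add: finite_subset)
    have "?C^(?m - ?K) \<le> ?C^(?m - card E')"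
      using card_copy_edges_le[OF _ c(2)] \<open>?C \<ge> 1\<close> by (intro power_increasing) auto
    also have "\<dots> \<le> card {p \<in> pair_selections HH. E' \<subseteq> p ` HH}"
      using card_selections_covering_ge[OF HH \<open>finite E'\<close> \<open>E' \<subseteq> shadow HH\<close> c(3)] .
    finally show "?C^(?m - ?K) \<le> card {p \<in> pair_selections HH. snd c \<subseteq> p ` HH}"
      by (simp add: c(1))
  next
    fix p assume p: "p \<in> pair_selections HH"
    have "{c \<in> ?B. snd c \<subseteq> p ` HH} \<subseteq> copies VH EH {0..<n} (p ` HH)"
      using copies_mono_edges by fastforce
    then have "card {c \<in> ?B. snd c \<subseteq> p ` HH} \<le> num_copies VH EH {0..<n} (p ` HH)"
      unfolding num_copies_eq_card_copies by (intro card_mono finite_copies) simp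
    also have "\<dots> \<le> ?ex"
    proof (rule num_copies_le_ex_gen)
      show "is_graph {0..<n} (p ` HH)"
        using pair_selectionsD[OF p] uniform_hypergraphsD(1)[OF assms(2)]
        unfolding is_graph_def by blast
      show "\<not> contains_subgraph VF EF {0..<n} (p ` HH)"
        by (rule selected_graph_not_contains_subgraph[OF assms(1) p assms(5)])
    qed
    finally show "card {c \<in> ?B. snd c \<subseteq> p ` HH} \<le> ?ex" .
  qed
  also have "\<dots> \<le> (?C^?K * ?C^(?m - ?K)) * ?ex"
  proof (rule mult_le_mono1)
    have "?m \<le> ?K + (?m - ?K)" by simp
    then have "?C^?m \<le> ?C^(?K + (?m - ?K))" using \<open>?C \<ge> 1\<close> by (rule power_increasing)
    then show "card (pair_selections HH) \<le> ?C^?K * ?C^(?m - ?K)"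
      by (simp add: card_pair_selections[OF HH] power_add)
  qed
  also have "\<dots> = (?C^?K * ?ex) * ?C^(?m - ?K)" by (simp only: ac_simps)
  finally have "card ?B * ?C^(?m - ?K) \<le> (?C^?K * ?ex) * ?C^(?m - ?K)" .
  moreover have "0 < ?C^(?m - ?K)" using \<open>?C \<ge> 1\<close> by (intro zero_less_power) linarith
  ultimately show ?thesis by (meson mult_le_cancel2)
qed

lemma num_copies_shadow_Berge_free_le:
  assumes "is_graph VF EF" "finite VH" "card VF \<le> r" "card VF \<le> n"
    and "HH \<in> uniform_hypergraphs r n" "\<not> contains_Berge VF EF {0..<n} HH"
  shows "num_copies VH EH {0..<n} (shadow HH)
           \<le> (r choose 2)^(2^card VH) * ex_gen n VH EH VF EF
             + 2^(2^card VH) * card EF * r^3 * n^(card VH - 1)"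
proof -
  let ?copies = "copies VH EH {0..<n} (shadow HH)"
  let ?A = "{c \<in> ?copies. \<not> one_edge_per_hyperedge HH (snd c)}"
  let ?B = "{c \<in> ?copies. one_edge_per_hyperedge HH (snd c)}"
  have "2 \<le> r" using two_le_card_if_Berge_free[OF assms(1,4,6)] assms(3) by simp
  have shadow_pairs: "\<forall>e\<in>shadow HH. card e = 2" using shadow_edgeD(1) by blast
  have "?copies = ?A \<union> ?B" "?A \<inter> ?B = {}" by blast+
  then have "num_copies VH EH {0..<n} (shadow HH) = card ?A + card ?B"
    unfolding num_copies_eq_card_copies
    by (metis (no_types, lifting) card_Un_disjoint finite_Un finite_atLeastLessThan finite_copies)
  moreover have "card ?A \<le> 2^(2^card VH) * card EF * r^3 * n^(card VH - 1)"
  proof (cases "?A = {}")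
    case True
    then show ?thesis by (simp only: card.empty le0)
  next
    case False
    then obtain V' E' where "(V', E') \<in> ?copies" "\<not> one_edge_per_hyperedge HH E'" by auto
    then have "3 \<le> card VH"
      using three_le_card_if_not_one_edge_per_hyperedge[of "{0..<n}"] shadow_pairs by blast
    then have "card VH - 1 = 2 + (card VH - 3)" by simp
    then have split_power: "n^(card VH - 1) = n^2 * n^(card VH - 3)"
      by (simp only: power_add)
    have "card ?A \<le> 2^(2^card VH) * card HH * r^3 * n^(card VH - 3)"
      using card_copies_not_one_edge_per_hyperedge_le[OF assms(5) shadow_pairs] .
    also have "\<dots> \<le> 2^(2^card VH) * (card EF * n^2) * r^3 * n^(card VH - 3)"
      using card_Berge_free_le[OF assms(1,5,3,6)] by (intro mult_le_mono1 mult_le_mono2)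
    also have "\<dots> = 2^(2^card VH) * card EF * r^3 * n^(card VH - 1)"
      unfolding split_power by (simp only: ac_simps)
    finally show ?thesis .
  qed
  moreover have "card ?B \<le> (r choose 2)^(2^card VH) * ex_gen n VH EH VF EF"
    using card_copies_one_edge_per_hyperedge_le[OF assms(1,5) \<open>2 \<le> r\<close> assms(2,6)] .
  ultimately show ?thesis by linarith
qed

theorem proposition7:
  fixes VF :: "'a set" and EF :: "'a set set" and VH :: "'b set" and EH :: "'b set set"
    and r :: nat
  assumes "is_graph VF EF" and "is_graph VH EH" and "r \<ge> card VF"
  shows "\<exists>C1 C2 :: real. \<exists>N. \<forall>n\<ge>N.
           real (ex_hat r n VH EH VF EF)
             \<le> C1 * real (ex_gen n VH EH VF EF) + C2 * real n ^ (card VH - 1)"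
proof (intro exI allI impI)
  fix n assume "card VF \<le> n"
  have "finite VH" using assms(2) unfolding is_graph_def by simp
  have "ex_hat r n VH EH VF EF
          \<le> (r choose 2)^(2^card VH) * ex_gen n VH EH VF EF
            + 2^(2^card VH) * card EF * r^3 * n^(card VH - 1)"
    using num_copies_shadow_Berge_free_le[OF assms(1) \<open>finite VH\<close> assms(3) \<open>card VF \<le> n\<close>]
    by (rule ex_hat_le)
  then show "real (ex_hat r n VH EH VF EF)
      \<le> real ((r choose 2)^(2^card VH)) * real (ex_gen n VH EH VF EF)
        + real (2^(2^card VH) * card EF * r^3) * real n ^ (card VH - 1)"
    by (simp only: of_nat_le_iff flip: of_nat_mult of_nat_add of_nat_power)
qed

end
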